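(* Let $X$ be a complete CAT(1) space with $\mathrm{Diam}(X)<\pi/2$ and $T\colon X\to X$ a firmly vicinal mapping. Then for each $x\in X$, $\{T^nx\}$ is $\Delta$-convergent to an element of $\mathrm{Fix}(T)$.
   Context: A CAT(1) space is a $\pi$-geodesic metric space in which every geodesic triangle of perimeter $<2\pi$ satisfies the CAT(1) comparison inequality relative to comparison triangles in the unit sphere $\mathbb S^2$. $\{x_n\}$ is $\Delta$-convergent to $p$ if for every subsequence $\{x_{n_i}\}$, $p$ is the unique point $z$ minimizing $\limsup_i d(x_{n_i},z)$. With $C_z=\cos d(Tz,z)$, $T$ is firmly vicinal if for all $x,y\in X$: $\bigl(C_x^2(1+C_y^2)C_y+C_y^2(1+C_x^2)C_x\bigr)\cos d(Tx,Ty)\ge C_x^2(1+C_y^2)\cos d(Tx,y)+C_y^2(1+C_x^2)\cos d(Ty,x)$. *)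

theory Defs
  imports "HOL-Analysis.Analysis"
begin

definition S2 :: "(real^3) set" where
  "S2 = {u. norm u = 1}"

definition sdist :: "real^3 \<Rightarrow> real^3 \<Rightarrow> real" where
  "sdist u v = arccos (u \<bullet> v)"

definition geodesic_path :: "'a::metric_space set \<Rightarrow> (real \<Rightarrow> 'a) \<Rightarrow> 'a \<Rightarrow> 'a \<Rightarrow> bool" where
  "geodesic_path X \<gamma> x y \<longleftrightarrow>
     \<gamma> 0 = x \<and> \<gamma> (dist x y) = y \<and> (\<forall>s\<in>{0..dist x y}. \<gamma> s \<in> X) \<and>
     (\<forall>s\<in>{0..dist x y}. \<forall>t\<in>{0..dist x y}. dist (\<gamma> s) (\<gamma> t) = \<bar>s - t\<bar>)"

definition pi_geodesic :: "'a::metric_space set \<Rightarrow> bool" where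
  "pi_geodesic X \<longleftrightarrow> (\<forall>x\<in>X. \<forall>y\<in>X. dist x y < pi \<longrightarrow> (\<exists>\<gamma>. geodesic_path X \<gamma> x y))"

(* A point g(s) of a side [a,b] has comparison point u' on [a',b']
   characterised by sdist a' u' = s and sdist u' b' = d(a,b) - s. *)
definition cat1_ineq :: "'a::metric_space \<Rightarrow> 'a \<Rightarrow> 'a \<Rightarrow> (real \<Rightarrow> 'a) \<Rightarrow> (real \<Rightarrow> 'a) \<Rightarrow> (real \<Rightarrow> 'a) \<Rightarrow> bool" where
  "cat1_ineq p q r g1 g2 g3 \<longleftrightarrow>
    (\<forall>p' q' r'. p' \<in> S2 \<and> q' \<in> S2 \<and> r' \<in> S2 \<and>
       sdist p' q' = dist p q \<and> sdist q' r' = dist q r \<and> sdist r' p' = dist r p \<longrightarrow>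
       (\<forall>(\<gamma>, a, b, a', b') \<in> {(g1, p, q, p', q'), (g2, q, r, q', r'), (g3, r, p, r', p')}.
        \<forall>(\<delta>, c, e, c', e') \<in> {(g1, p, q, p', q'), (g2, q, r, q', r'), (g3, r, p, r', p')}.
        \<forall>s t u' v'. s \<in> {0..dist a b} \<and> t \<in> {0..dist c e} \<and> u' \<in> S2 \<and> v' \<in> S2 \<and>
           sdist a' u' = s \<and> sdist u' b' = dist a b - s \<and>
           sdist c' v' = t \<and> sdist v' e' = dist c e - t \<longrightarrow>
           dist (\<gamma> s) (\<delta> t) \<le> sdist u' v'))"

definition CAT1_space :: "'a::metric_space set \<Rightarrow> bool" where
  "CAT1_space X \<longleftrightarrow> pi_geodesic X \<and>
    (\<forall>p\<in>X. \<forall>q\<in>X. \<forall>r\<in>X. \<forall>g1 g2 g3.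
       geodesic_path X g1 p q \<and> geodesic_path X g2 q r \<and> geodesic_path X g3 r p \<and>
       dist p q + dist q r + dist r p < 2 * pi \<longrightarrow> cat1_ineq p q r g1 g2 g3)"

definition firmly_vicinal :: "'a::metric_space set \<Rightarrow> ('a \<Rightarrow> 'a) \<Rightarrow> bool" where
  "firmly_vicinal X T \<longleftrightarrow> (\<forall>x\<in>X. \<forall>y\<in>X.
     let Cx = cos (dist (T x) x); Cy = cos (dist (T y) y) in
     (Cx\<^sup>2 * (1 + Cy\<^sup>2) * Cy + Cy\<^sup>2 * (1 + Cx\<^sup>2) * Cx) * cos (dist (T x) (T y))
       \<ge> Cx\<^sup>2 * (1 + Cy\<^sup>2) * cos (dist (T x) y) + Cy\<^sup>2 * (1 + Cx\<^sup>2) * cos (dist (T y) x))"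

definition Delta_convergent :: "'a::metric_space set \<Rightarrow> (nat \<Rightarrow> 'a) \<Rightarrow> 'a \<Rightarrow> bool" where
  "Delta_convergent X x p \<longleftrightarrow> p \<in> X \<and>
     (\<forall>r::nat\<Rightarrow>nat. strict_mono r \<longrightarrow>
        (\<forall>z\<in>X. z \<noteq> p \<longrightarrow>
           limsup (\<lambda>i. ereal (dist (x (r i)) p)) < limsup (\<lambda>i. ereal (dist (x (r i)) z))))"

end

theory Submission
  imports Defs
begin

(*
  Write A_y(z) = liminf cos d(y n, z), the cosine form of the asymptotic radius
  limsup d(y n, z).  Comparing a triangle with its spherical model at the midpoint m of
  [p, z] gives cos d(x, p) + cos d(x, z) <= 2 cos (d(p, z) / 2) cos d(x, m); this makes
  maximising sequences of A_y Cauchy, so by completeness A_y has a unique maximiser over X,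
  the asymptotic centre of y.

  Firm vicinality says that cos d(T x, T z) is at least a convex combination of cos d(T x, z)
  and cos d(x, T z) whose weight on the first term is at least cos^2 (diam X) / 4.  Along an
  orbit x_n = T^n x this lets cos d(x_n, T q) dominate a relaxation of cos d(x_n, q), so
  A(T q) >= A(q), and the asymptotic centre p of the orbit is a fixed point.  For a fixed
  point, cos d(x_n, p) increases (Fejer monotonicity); this gives d(x_(n+1), x_n) -> 0, and
  then the same comparison works along every subsequence, whose asymptotic centre is
  therefore fixed as well.  At fixed points A does not depend on the subsequence, so all
  these centres equal p: the orbit Delta-converges to p.
*)

section \<open>Liminf of bounded real sequences\<close>

(* real_of_ereal sends \<plusminus>\<infinity> to 0, so the value is only meaningful for bounded sequences. *)
definition liminf_real :: "(nat \<Rightarrow> real) \<Rightarrow> real" where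
  "liminf_real w = real_of_ereal (liminf (\<lambda>n. ereal (w n)))"

lemma liminf_ereal_eq_liminf_real:
  assumes "bounded (range w)"
  shows "liminf (\<lambda>n. ereal (w n)) = ereal (liminf_real w)"
proof -
  obtain B where B: "\<And>n. \<bar>w n\<bar> \<le> B"
    using assms by (auto simp: bounded_iff)
  have bounds: "- B \<le> w n" "w n \<le> B" for n
    using B[of n] by linarith+
  have "ereal (- B) \<le> liminf (\<lambda>n. ereal (w n))"
    by (intro Liminf_bounded always_eventually) (use bounds in auto)
  moreover have "liminf (\<lambda>n. ereal (w n)) \<le> ereal B"
    by (intro Liminf_le always_eventually) (use bounds in auto)
  ultimately show ?thesis
    unfolding liminf_real_def by (cases "liminf (\<lambda>n. ereal (w n))") auto
qed

lemma liminf_real_mono: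
  assumes "bounded (range u)" "bounded (range v)" "eventually (\<lambda>n. u n \<le> v n) sequentially"
  shows "liminf_real u \<le> liminf_real v"
proof -
  have "liminf (\<lambda>n. ereal (u n)) \<le> liminf (\<lambda>n. ereal (v n))"
    by (rule Liminf_mono) (use assms(3) in simp)
  then show ?thesis using liminf_ereal_eq_liminf_real assms(1,2) by simp
qed

lemma liminf_real_tendsto:
  assumes "w \<longlonglongrightarrow> a"
  shows "liminf_real w = a"
proof -
  have "liminf (\<lambda>n. ereal (w n)) = ereal a"
    by (rule lim_imp_Liminf) (use assms in auto)
  then show ?thesis by (simp add: liminf_real_def)
qed

lemma liminf_real_const [simp]: "liminf_real (\<lambda>n. c) = c"
  by (rule liminf_real_tendsto) simp

lemma liminf_real_le_const:
  assumes "bounded (range w)" "\<And>n. w n \<le> c"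
  shows "liminf_real w \<le> c"
  using liminf_real_mono[OF assms(1), of "\<lambda>n. c"] assms(2) by simp

lemma const_le_liminf_real:
  assumes "bounded (range w)" "\<And>n. c \<le> w n"
  shows "c \<le> liminf_real w"
  using liminf_real_mono[OF _ assms(1), of "\<lambda>n. c"] assms(2) by simp

lemma liminf_real_add_tendsto:
  assumes "g \<longlonglongrightarrow> a" "bounded (range u)"
  shows "liminf_real (\<lambda>n. g n + u n) = a + liminf_real u"
proof -
  have "liminf (\<lambda>n. ereal (g n) + ereal (u n)) = ereal a + liminf (\<lambda>n. ereal (u n))"
    by (rule ereal_liminf_lim_add) (use assms(1) in auto)
  moreover have "bounded (range (\<lambda>n. g n + u n))"
    using bounded_plus_comp[OF convergent_imp_bounded[OF assms(1)] assms(2)] .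
  ultimately show ?thesis using liminf_ereal_eq_liminf_real assms(2) by simp
qed

lemma liminf_real_add_ge:
  assumes "bounded (range u)" "bounded (range v)"
  shows "liminf_real u + liminf_real v \<le> liminf_real (\<lambda>n. u n + v n)"
proof -
  have "liminf (\<lambda>n. ereal (u n)) + liminf (\<lambda>n. ereal (v n))
          \<le> liminf (\<lambda>n. ereal (u n) + ereal (v n))"
    by (rule ereal_liminf_add_mono) (use liminf_ereal_eq_liminf_real assms in simp)
  moreover have "bounded (range (\<lambda>n. u n + v n))"
    using bounded_plus_comp[OF assms] .
  ultimately show ?thesis using liminf_ereal_eq_liminf_real assms by simp
qed

lemma liminf_real_cmult:
  assumes "bounded (range u)" "0 \<le> c"
  shows "liminf_real (\<lambda>n. c * u n) = c * liminf_real u"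
proof -
  have "liminf (\<lambda>n. ereal c * ereal (u n)) = ereal c * liminf (\<lambda>n. ereal (u n))"
    by (rule Liminf_ereal_mult_left) (use assms(2) in auto)
  moreover have "bounded (range (\<lambda>n. c * u n))"
    using bounded_scaling[OF assms(1), of c] by (simp add: image_image)
  ultimately show ?thesis using liminf_ereal_eq_liminf_real assms(1) by simp
qed

lemma liminf_real_eventually_gt:
  assumes "bounded (range w)" "s < liminf_real w"
  shows "eventually (\<lambda>n. s < w n) sequentially"
proof -
  have "ereal s < liminf (\<lambda>n. ereal (w n))"
    using liminf_ereal_eq_liminf_real[OF assms(1)] assms(2) by simp
  from less_LiminfD[OF this] show ?thesis by simp
qed

lemma liminf_real_frequently_lt:
  assumes "bounded (range w)" "liminf_real w < s"
  shows "frequently (\<lambda>n. w n < s) sequentially"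
proof -
  have "\<not> ereal s \<le> liminf (\<lambda>n. ereal (w n))"
    using liminf_ereal_eq_liminf_real[OF assms(1)] assms(2) by simp
  then obtain t where t: "t < ereal s" "\<not> eventually (\<lambda>n. t < ereal (w n)) sequentially"
    unfolding le_Liminf_iff by blast
  show ?thesis
  proof (rule ccontr)
    assume "\<not> ?thesis"
    then have "eventually (\<lambda>n. t < ereal (w n)) sequentially"
      unfolding not_frequently
      by (rule eventually_mono) (use t(1) in \<open>fastforce simp: not_less intro: less_le_trans\<close>)
    with t(2) show False ..
  qed
qed

lemma le_liminf_real:
  assumes "bounded (range w)" "\<And>s. s < L \<Longrightarrow> eventually (\<lambda>n. s < w n) sequentially"
  shows "L \<le> liminf_real w"
proof -
  have "ereal L \<le> liminf (\<lambda>n. ereal (w n))"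
    unfolding le_Liminf_iff
  proof (intro allI impI)
    fix y assume "y < ereal L"
    then show "eventually (\<lambda>n. y < ereal (w n)) sequentially"
      by (cases y) (auto intro: eventually_mono[OF assms(2)])
  qed
  then show ?thesis using liminf_ereal_eq_liminf_real[OF assms(1)] by simp
qed

lemma liminf_real_le_vanishing_perturbation:
  assumes "bounded (range u)" "bounded (range v)" "g \<longlonglongrightarrow> 0"
    and "eventually (\<lambda>n. v n \<le> g n + u n) sequentially"
  shows "liminf_real v \<le> liminf_real u"
proof -
  have "bounded (range (\<lambda>n. g n + u n))"
    using bounded_plus_comp[OF convergent_imp_bounded[OF assms(3)] assms(1)] .
  then have "liminf_real v \<le> liminf_real (\<lambda>n. g n + u n)"
    using liminf_real_mono assms(2,4) by blast
  also have "\<dots> = liminf_real u"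
    using liminf_real_add_tendsto[OF assms(3,1)] by simp
  finally show ?thesis .
qed

section \<open>Sequences dominating a relaxation\<close>

definition dominates_relaxation :: "real \<Rightarrow> (nat \<Rightarrow> real) \<Rightarrow> (nat \<Rightarrow> real) \<Rightarrow> bool" where
  "dominates_relaxation \<delta> u v \<longleftrightarrow>
     (\<forall>n. \<exists>l. \<delta> \<le> l \<and> l \<le> 1 \<and> l * v (Suc n) + (1 - l) * u n \<le> u (Suc n))"

lemma dominates_relaxation_step:
  assumes "dominates_relaxation \<delta> u v" "0 \<le> \<delta>" "\<delta> \<le> 1" "t < v (Suc n)"
  shows "min 0 ((1 - \<delta>) * (u n - t)) \<le> u (Suc n) - t"
proof -
  obtain l where l: "\<delta> \<le> l" "l \<le> 1" "l * v (Suc n) + (1 - l) * u n \<le> u (Suc n)"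
    using assms(1) unfolding dominates_relaxation_def by blast
  have "l * (v (Suc n) - t) + (1 - l) * (u n - t) \<le> u (Suc n) - t"
    using l(3) by (simp add: algebra_simps)
  moreover have "0 \<le> l * (v (Suc n) - t)"
    using l assms(2,4) by simp
  moreover have "min 0 ((1 - \<delta>) * (u n - t)) \<le> (1 - l) * (u n - t)"
  proof (cases "0 \<le> u n - t")
    case False
    then have "(1 - \<delta>) * (u n - t) \<le> (1 - l) * (u n - t)"
      using l by (intro mult_right_mono_neg) auto
    then show ?thesis by (simp add: min.coboundedI2)
  qed (use l in simp)
  ultimately show ?thesis by linarith
qed

lemma dominates_relaxation_eventually_gt:
  assumes rel: "dominates_relaxation \<delta> u v" and \<delta>: "0 < \<delta>" "\<delta> \<le> 1"
    and v: "eventually (\<lambda>n. t < v n) sequentially" and "s < t"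
  shows "eventually (\<lambda>n. s < u n) sequentially"
proof -
  obtain N where N: "\<And>n. N \<le> n \<Longrightarrow> t < v n"
    using v unfolding eventually_sequentially by blast
  \<comment> \<open>from \<open>N\<close> on, the shortfall of \<open>u\<close> below \<open>t\<close> shrinks by the factor \<open>1 - \<delta>\<close> at each step\<close>
  define M where "M = \<bar>u N - t\<bar>"
  have decay: "- ((1 - \<delta>) ^ k * M) \<le> u (N + k) - t" for k
  proof (induction k)
    case (Suc k)
    have "(1 - \<delta>) * (- ((1 - \<delta>) ^ k * M)) \<le> (1 - \<delta>) * (u (N + k) - t)"
      using Suc \<delta> by (intro mult_left_mono) auto
    moreover have "- ((1 - \<delta>) ^ Suc k * M) \<le> 0"
      using \<delta> by (simp add: M_def)
    ultimately show ?case
      using dominates_relaxation_step[OF rel _ \<delta>(2) N[of "Suc (N + k)"]] \<delta>(1) by simp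
  qed (simp add: M_def)
  have "(\<lambda>k. (1 - \<delta>) ^ k * M) \<longlonglongrightarrow> 0"
    using \<delta> by (intro tendsto_mult_left_zero LIMSEQ_power_zero) auto
  then have "eventually (\<lambda>k. (1 - \<delta>) ^ k * M < t - s) sequentially"
    using \<open>s < t\<close> by (intro order_tendstoD) auto
  then obtain K where K: "\<And>k. K \<le> k \<Longrightarrow> (1 - \<delta>) ^ k * M < t - s"
    unfolding eventually_sequentially by blast
  show ?thesis
    unfolding eventually_sequentially
  proof (intro exI allI impI)
    fix n assume "N + K \<le> n"
    then have "u n = u (N + (n - N))" "K \<le> n - N" by simp_all
    then show "s < u n"
      using decay[of "n - N"] K[of "n - N"] by linarith
  qed
qed

lemma liminf_real_le_of_dominates_relaxation:
  assumes "bounded (range u)" "bounded (range v)"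
    and "dominates_relaxation \<delta> u v" "0 < \<delta>" "\<delta> \<le> 1"
  shows "liminf_real v \<le> liminf_real u"
proof (rule le_liminf_real[OF assms(1)])
  fix s assume s: "s < liminf_real v"
  then have ev: "eventually (\<lambda>n. (s + liminf_real v) / 2 < v n) sequentially"
    by (intro liminf_real_eventually_gt[OF assms(2)]) simp
  show "eventually (\<lambda>n. s < u n) sequentially"
    using dominates_relaxation_eventually_gt[OF assms(3-5) ev] s by simp
qed

lemma dominates_relaxation_gap:
  assumes "dominates_relaxation \<delta> u v" "0 < \<delta>"
  shows "v (Suc n) \<le> \<bar>u (Suc n) - u n\<bar> / \<delta> + u (Suc n)"
proof -
  obtain l where l: "\<delta> \<le> l" "l \<le> 1" "l * v (Suc n) + (1 - l) * u n \<le> u (Suc n)"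
    using assms(1) unfolding dominates_relaxation_def by blast
  have "l * (v (Suc n) - u (Suc n)) \<le> (1 - l) * (u (Suc n) - u n)"
    using l(3) by (simp add: algebra_simps)
  also have "\<dots> \<le> (1 - l) * \<bar>u (Suc n) - u n\<bar>"
    using l(2) by (intro mult_left_mono) auto
  also have "\<dots> \<le> \<bar>u (Suc n) - u n\<bar>"
    using l assms(2) by (intro mult_left_le_one_le) auto
  finally have "v (Suc n) - u (Suc n) \<le> \<bar>u (Suc n) - u n\<bar> / l"
    using l(1) assms(2) by (simp add: field_simps)
  also have "\<dots> \<le> \<bar>u (Suc n) - u n\<bar> / \<delta>"
    using l(1) assms(2) by (intro divide_left_mono) auto
  finally show ?thesis by simp
qed

lemma liminf_real_subseq_le_of_dominates_relaxation:
  assumes u: "bounded (range u)" and v: "bounded (range v)"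
    and rel: "dominates_relaxation \<delta> u v" and "0 < \<delta>"
    and reg: "(\<lambda>n. u (Suc n) - u n) \<longlonglongrightarrow> 0" and r: "strict_mono r"
  shows "liminf_real (v \<circ> r) \<le> liminf_real (u \<circ> r)"
proof (rule liminf_real_le_vanishing_perturbation)
  define g where "g n = \<bar>u n - u (n - 1)\<bar> / \<delta>" for n
  have "(\<lambda>n. g (Suc n)) \<longlonglongrightarrow> 0"
    using tendsto_divide[OF tendsto_rabs[OF reg] tendsto_const[of \<delta>]] \<open>0 < \<delta>\<close> by (simp add: g_def)
  then show "(g \<circ> r) \<longlonglongrightarrow> 0"
    by (intro LIMSEQ_subseq_LIMSEQ r) (simp add: filterlim_sequentially_Suc)
  have "v n \<le> g n + u n" if "1 \<le> n" for n
    using dominates_relaxation_gap[OF rel \<open>0 < \<delta>\<close>, of "n - 1"] that by (simp add: g_def)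
  then show "eventually (\<lambda>i. (v \<circ> r) i \<le> (g \<circ> r) i + (u \<circ> r) i) sequentially"
    unfolding eventually_sequentially using seq_suble[OF r] by (metis comp_apply le_trans)
qed (use u v in \<open>auto intro: bounded_subset[of "range u"] bounded_subset[of "range v"]\<close>)

lemma abs_cos_diff_le: "\<bar>cos a - cos b\<bar> \<le> \<bar>a - b :: real\<bar>"
proof -
  have "\<bar>cos a - cos b\<bar> = 2 * \<bar>sin ((a + b) / 2)\<bar> * \<bar>sin ((b - a) / 2)\<bar>"
    by (simp add: cos_diff_cos abs_mult)
  also have "\<dots> \<le> 2 * 1 * \<bar>(b - a) / 2\<bar>"
    by (intro mult_mono abs_sin_le_one abs_sin_x_le_abs_x) auto
  finally show ?thesis by simp
qed

lemma abs_cos_dist_diff_le: "\<bar>cos (dist x z) - cos (dist y z)\<bar> \<le> dist x y"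
  using abs_cos_diff_le[of "dist x z" "dist y z"] abs_dist_diff_le[of x z y]
  by (simp add: dist_commute)

lemma le_cos_of_le_arccos:
  fixes d q :: real
  assumes "\<bar>q\<bar> \<le> 1" "0 \<le> d" "d \<le> arccos q"
  shows "q \<le> cos d"
proof -
  have "cos (arccos q) \<le> cos d"
    using assms by (intro cos_monotone_0_pi_le arccos_ubound) (auto simp: abs_le_iff)
  with assms(1) show ?thesis
    by (simp add: abs_le_iff)
qed

lemma bounded_range_cos: "bounded (range (\<lambda>n. cos (f n :: real)))"
  by (rule boundedI[of _ 1]) (auto simp: real_norm_def abs_cos_le_one)

lemma limsup_le_arccos_of_less_liminf_cos:
  assumes d: "\<And>n. 0 \<le> d n" "\<And>n. d n \<le> pi" and t: "- 1 \<le> t" "t < liminf_real (\<lambda>n. cos (d n))"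
  shows "limsup (\<lambda>n. ereal (d n)) \<le> ereal (arccos t)"
proof (rule Limsup_bounded)
  show "eventually (\<lambda>n. ereal (d n) \<le> ereal (arccos t)) sequentially"
    using liminf_real_eventually_gt[OF bounded_range_cos t(2)]
  proof (rule eventually_mono)
    fix n assume "t < cos (d n)"
    then have "arccos (cos (d n)) < arccos t"
      using t(1) by (intro arccos_less_arccos) auto
    then show "ereal (d n) \<le> ereal (arccos t)"
      using d[of n] by (simp add: arccos_cos)
  qed
qed

lemma arccos_le_limsup_of_liminf_cos_less:
  assumes d: "\<And>n. 0 \<le> d n" "\<And>n. d n \<le> pi" and t: "liminf_real (\<lambda>n. cos (d n)) < t" "t \<le> 1"
  shows "ereal (arccos t) \<le> limsup (\<lambda>n. ereal (d n))"
proof (rule ccontr)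
  assume "\<not> ?thesis"
  then have "limsup (\<lambda>n. ereal (d n)) < ereal (arccos t)"
    by simp
  from Limsup_lessD[OF this] have "eventually (\<lambda>n. d n < arccos t) sequentially"
    by simp
  moreover have "frequently (\<lambda>n. cos (d n) < t) sequentially"
    by (rule liminf_real_frequently_lt[OF bounded_range_cos t(1)])
  ultimately have "frequently (\<lambda>n. d n < arccos t \<and> cos (d n) < t) sequentially"
    by (simp add: frequently_eventually_conj)
  then obtain n where "d n < arccos t" "cos (d n) < t"
    by (auto dest: frequently_ex)
  moreover have "arccos t < arccos (cos (d n))"
    using calculation(2) t(2) by (intro arccos_less_arccos) auto
  ultimately show False
    using d[of n] by (simp add: arccos_cos)
qed

section \<open>Spherical comparison\<close>

lemma spherical_angle_cos_exists:
  fixes a b c :: real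
  assumes "0 \<le> a" "0 \<le> b" "0 \<le> c" "a + b < pi" "c \<le> a + b" "a \<le> b + c" "b \<le> a + c"
  obtains \<alpha> where "\<alpha>\<^sup>2 \<le> 1" "cos a * cos b + sin a * sin b * \<alpha> = cos c"
proof (cases "a = 0 \<or> b = 0")
  case True
  then have "c = a + b"
    using assms by auto
  with True show ?thesis
    using that[of 1] by auto
next
  case False
  have sin_pos: "sin a > 0" "sin b > 0"
    using False assms by (auto intro: sin_gt_zero)
  define \<alpha> where "\<alpha> = (cos c - cos a * cos b) / (sin a * sin b)"
  have "cos c \<le> cos \<bar>a - b\<bar>"
    using assms by (intro cos_monotone_0_pi_le) auto
  also have "cos \<bar>a - b\<bar> = cos a * cos b + sin a * sin b"
    by (simp add: abs_if cos_diff)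
  finally have upper: "cos c - cos a * cos b \<le> sin a * sin b"
    by simp
  have "cos (a + b) \<le> cos c"
    using assms by (intro cos_monotone_0_pi_le) auto
  then have lower: "- (sin a * sin b) \<le> cos c - cos a * cos b"
    by (simp add: cos_add)
  have "\<bar>\<alpha>\<bar> \<le> 1"
    using upper lower sin_pos by (simp add: \<alpha>_def abs_le_iff divide_le_eq_1 le_divide_eq)
  then have "\<alpha>\<^sup>2 \<le> 1"
    by (simp add: abs_le_square_iff[of \<alpha> 1, simplified])
  moreover have "cos a * cos b + sin a * sin b * \<alpha> = cos c"
    using sin_pos by (simp add: \<alpha>_def)
  ultimately show ?thesis
    by (rule that)
qed

lemma spherical_triangle_exists:
  fixes a b c :: real
  assumes "0 \<le> a" "0 \<le> b" "0 \<le> c" "a + b < pi" "c \<le> a + b" "a \<le> b + c" "b \<le> a + c"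
  shows "\<exists>x p z :: real^3. norm x = 1 \<and> norm p = 1 \<and> norm z = 1 \<and>
           x \<bullet> p = cos a \<and> x \<bullet> z = cos b \<and> p \<bullet> z = cos c"
proof -
  define e1 :: "real^3" where "e1 = axis 1 1"
  define e2 :: "real^3" where "e2 = axis 2 1"
  define e3 :: "real^3" where "e3 = axis 3 1"
  have o: "e1 \<bullet> e1 = 1" "e2 \<bullet> e2 = 1" "e3 \<bullet> e3 = 1" "e1 \<bullet> e2 = 0" "e1 \<bullet> e3 = 0" "e2 \<bullet> e3 = 0"
    "e2 \<bullet> e1 = 0" "e3 \<bullet> e1 = 0" "e3 \<bullet> e2 = 0"
    by (simp_all add: e1_def e2_def e3_def inner_axis_axis)
  \<comment> \<open>\<open>\<alpha>\<close> is the cosine of the angle at the vertex \<open>x\<close> (spherical law of cosines)\<close>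
  obtain \<alpha> where \<alpha>: "\<alpha>\<^sup>2 \<le> 1" "cos a * cos b + sin a * sin b * \<alpha> = cos c"
    using spherical_angle_cos_exists[OF assms] .
  define \<beta> where "\<beta> = sqrt (1 - \<alpha>\<^sup>2)"
  have \<beta>: "\<beta>\<^sup>2 = 1 - \<alpha>\<^sup>2"
    using \<alpha>(1) by (simp add: \<beta>_def)
  define p where "p = cos a *\<^sub>R e1 + sin a *\<^sub>R e2"
  define z where "z = cos b *\<^sub>R e1 + (sin b * \<alpha>) *\<^sub>R e2 + (sin b * \<beta>) *\<^sub>R e3"
  have "p \<bullet> p = 1"
    by (simp add: p_def inner_add_left inner_add_right o power2_eq_square[symmetric])
  moreover have "z \<bullet> z = (cos b)\<^sup>2 + (sin b)\<^sup>2 * (\<alpha>\<^sup>2 + \<beta>\<^sup>2)"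
    by (simp add: z_def inner_add_left inner_add_right o power2_eq_square algebra_simps)
  moreover have "p \<bullet> z = cos a * cos b + sin a * sin b * \<alpha>"
    by (simp add: p_def z_def inner_add_left inner_add_right o algebra_simps)
  ultimately have "norm p = 1" "norm z = 1" "p \<bullet> z = cos c"
    using \<alpha>(2) \<beta> by (simp_all add: norm_eq_sqrt_inner)
  moreover have "norm e1 = 1" "e1 \<bullet> p = cos a" "e1 \<bullet> z = cos b"
    by (simp_all add: e1_def p_def z_def inner_add_right o[unfolded e1_def])
  ultimately show ?thesis by blast
qed

lemma spherical_midpoint:
  fixes p z x :: "real^3"
  assumes "norm p = 1" "norm z = 1" "p \<bullet> z = cos c" "0 \<le> c" "c < pi"
  defines "m \<equiv> (1 / (2 * cos (c / 2))) *\<^sub>R (p + z)"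
  shows "norm m = 1" "p \<bullet> m = cos (c / 2)" "m \<bullet> z = cos (c / 2)"
    and "m \<bullet> x = (p \<bullet> x + z \<bullet> x) / (2 * cos (c / 2))"
proof -
  have half: "cos (c / 2) > 0"
    using assms by (intro cos_gt_zero_pi) auto
  have double: "cos c = 2 * (cos (c / 2))\<^sup>2 - 1"
    using cos_double_cos[of "c / 2"] by simp
  have unit: "p \<bullet> p = 1" "z \<bullet> z = 1"
    using assms(1,2) by (simp_all add: dot_square_norm)
  have "m \<bullet> m = 1"
    unfolding m_def using unit assms(3) double half
    by (simp add: inner_add_left inner_add_right inner_commute power2_eq_square field_simps)
  then show "norm m = 1"
    by (simp add: norm_eq_sqrt_inner)
  show "p \<bullet> m = cos (c / 2)" "m \<bullet> z = cos (c / 2)"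
    unfolding m_def using unit assms(3) double half
    by (simp_all add: inner_add_left inner_add_right inner_commute power2_eq_square field_simps)
  show "m \<bullet> x = (p \<bullet> x + z \<bullet> x) / (2 * cos (c / 2))"
    by (simp add: m_def inner_add_left add_divide_distrib)
qed

lemma cat1_ineq_side_vertex:
  assumes "cat1_ineq p q r g1 g2 g3" "g3 0 = r"
    and "p' \<in> S2" "q' \<in> S2" "r' \<in> S2"
    and "sdist p' q' = dist p q" "sdist q' r' = dist q r" "sdist r' p' = dist r p"
    and "s \<in> {0..dist p q}" "u' \<in> S2" "sdist p' u' = s" "sdist u' q' = dist p q - s"
  shows "dist (g1 s) r \<le> sdist u' r'"
proof -
  have "p' \<in> S2 \<and> q' \<in> S2 \<and> r' \<in> S2 \<and>
      sdist p' q' = dist p q \<and> sdist q' r' = dist q r \<and> sdist r' p' = dist r p"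
    using assms(3-8) by blast
  note sides = assms(1)[unfolded cat1_ineq_def, rule_format, OF this, of "(g1, p, q, p', q')", simplified]
  have "sdist r' r' = 0"
    using \<open>r' \<in> S2\<close> by (simp add: S2_def sdist_def dot_square_norm)
  \<comment> \<open>the third conjunct compares side \<open>[p, q]\<close> with side \<open>[r, p]\<close>, whose point at \<open>0\<close> is \<open>r\<close>\<close>
  then have "dist (g1 s) (g3 0) \<le> sdist u' r'"
    using sides[THEN conjunct2, THEN conjunct2, rule_format, of u' r'] assms(3-12) by auto
  then show ?thesis
    using assms(2) by simp
qed

section \<open>Asymptotic centres in CAT(1) spaces of small diameter\<close>

locale small_CAT1_space =
  fixes X :: "'a::metric_space set"
  assumes CAT1: "CAT1_space X" and complete: "complete X"
    and bounded: "bounded X" and diameter_less: "diameter X < pi / 2"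
begin

lemma dist_less_pi_half: "a \<in> X \<Longrightarrow> b \<in> X \<Longrightarrow> dist a b < pi / 2"
  using diameter_bounded_bound[OF bounded] diameter_less by (meson le_less_trans)

lemma cos_diameter_pos: "0 < cos (diameter X)"
  using diameter_ge_0[OF bounded] diameter_less by (intro cos_gt_zero_pi) auto

lemma cos_diameter_le_cos_dist:
  assumes "a \<in> X" "b \<in> X"
  shows "cos (diameter X) \<le> cos (dist a b)"
proof (rule cos_monotone_0_pi_le)
  show "dist a b \<le> diameter X"
    by (rule diameter_bounded_bound[OF bounded assms])
  show "diameter X \<le> pi"
    using diameter_less pi_gt_zero by linarith
qed simp

lemma geodesic_exists:
  assumes "a \<in> X" "b \<in> X"
  shows "\<exists>\<gamma>. geodesic_path X \<gamma> a b"
proof -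
  have "dist a b < pi"
    using dist_less_pi_half[OF assms] pi_gt_zero by linarith
  then show ?thesis
    using CAT1 assms unfolding CAT1_space_def pi_geodesic_def by blast
qed

lemma cos_dist_midpoint_ge:
  assumes pX: "p \<in> X" and zX: "z \<in> X" and xX: "x \<in> X" and g1: "geodesic_path X g1 p z"
  shows "(cos (dist x p) + cos (dist x z)) / (2 * cos (dist p z / 2))
           \<le> cos (dist x (g1 (dist p z / 2)))"
proof -
  define a where "a = dist x p"
  define b where "b = dist x z"
  define c where "c = dist p z"
  have abc: "0 \<le> a" "a < pi / 2" "0 \<le> b" "b < pi / 2" "0 \<le> c" "c < pi / 2"
    using dist_less_pi_half xX pX zX by (auto simp: a_def b_def c_def)
  obtain g2 g3 where g2: "geodesic_path X g2 z x" and g3: "geodesic_path X g3 x p"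
    using geodesic_exists xX pX zX by metis
  have "dist p z + dist z x + dist x p < 2 * pi"
    using dist_less_pi_half[OF pX zX] dist_less_pi_half[OF zX xX] dist_less_pi_half[OF xX pX] pi_gt_zero
    by linarith
  then have cat1: "cat1_ineq p z x g1 g2 g3"
    using CAT1 pX zX xX g1 g2 g3 unfolding CAT1_space_def by blast
  have "c \<le> a + b" "a \<le> b + c" "b \<le> a + c"
    unfolding a_def b_def c_def by (metis dist_commute dist_triangle)+
  then obtain x' p' z' :: "real^3" where tri: "norm x' = 1" "norm p' = 1" "norm z' = 1"
    "x' \<bullet> p' = cos a" "x' \<bullet> z' = cos b" "p' \<bullet> z' = cos c"
    using spherical_triangle_exists[of a b c] abc by auto
  define m' where "m' = (1 / (2 * cos (c / 2))) *\<^sub>R (p' + z')"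
  have "c < pi"
    using abc pi_gt_zero by linarith
  note mid = spherical_midpoint[OF tri(2,3,6) abc(5) this, folded m'_def]
  have arccos_cos_sides: "arccos (cos a) = a" "arccos (cos b) = b" "arccos (cos c) = c"
    "arccos (cos (c / 2)) = c / 2"
    using abc by (simp_all add: arccos_cos)
  \<comment> \<open>\<open>m'\<close> is the comparison point of the midpoint of \<open>[p, z]\<close>\<close>
  have "dist (g1 (c / 2)) x \<le> sdist m' x'"
  proof (rule cat1_ineq_side_vertex[OF cat1])
    show "g3 0 = x"
      using g3 by (simp add: geodesic_path_def)
    show "p' \<in> S2" "z' \<in> S2" "x' \<in> S2" "m' \<in> S2"
      using tri mid by (auto simp: S2_def)
    show "sdist p' z' = dist p z" "sdist z' x' = dist z x" "sdist x' p' = dist x p"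
      using tri arccos_cos_sides by (simp_all add: sdist_def inner_commute a_def b_def c_def dist_commute)
    show "c / 2 \<in> {0..dist p z}" "sdist p' m' = c / 2" "sdist m' z' = dist p z - c / 2"
      using abc mid arccos_cos_sides by (simp_all add: sdist_def c_def)
  qed
  define q where "q = (cos a + cos b) / (2 * cos (c / 2))"
  have "\<bar>q\<bar> \<le> 1"
    using Cauchy_Schwarz_ineq2[of m' x'] mid tri by (simp add: q_def inner_commute)
  moreover have "dist x (g1 (c / 2)) \<le> arccos q"
    using \<open>dist (g1 (c / 2)) x \<le> sdist m' x'\<close> mid tri
    by (simp add: q_def sdist_def inner_commute dist_commute)
  ultimately have "q \<le> cos (dist x (g1 (c / 2)))"
    by (intro le_cos_of_le_arccos zero_le_dist)
  then show ?thesis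
    by (simp add: q_def a_def b_def c_def)
qed

lemma CAT1_midpoint_cos_ineq:
  assumes pX: "p \<in> X" and zX: "z \<in> X"
  shows "\<exists>m\<in>X. \<forall>x\<in>X. cos (dist x p) + cos (dist x z) \<le> 2 * cos (dist p z / 2) * cos (dist x m)"
proof -
  obtain g1 where g1: "geodesic_path X g1 p z"
    using geodesic_exists[OF pX zX] by blast
  define m where "m = g1 (dist p z / 2)"
  have "0 < cos (dist p z / 2)"
    using dist_less_pi_half[OF pX zX] zero_le_dist[of p z] by (intro cos_gt_zero_pi) linarith+
  have "m \<in> X"
    using g1 unfolding geodesic_path_def m_def by auto
  moreover have "cos (dist x p) + cos (dist x z) \<le> 2 * cos (dist p z / 2) * cos (dist x m)"
    if "x \<in> X" for x
    using cos_dist_midpoint_ge[OF pX zX that g1] \<open>0 < cos (dist p z / 2)\<close>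
    by (simp add: m_def field_simps)
  ultimately show ?thesis
    by blast
qed

end

definition asym_cos :: "(nat \<Rightarrow> 'a::metric_space) \<Rightarrow> 'a \<Rightarrow> real" where
  "asym_cos y z = liminf_real (\<lambda>n. cos (dist (y n) z))"

definition asymptotic_center :: "'a::metric_space set \<Rightarrow> (nat \<Rightarrow> 'a) \<Rightarrow> 'a \<Rightarrow> bool" where
  "asymptotic_center X y c \<longleftrightarrow> c \<in> X \<and> (\<forall>z\<in>X. z \<noteq> c \<longrightarrow> asym_cos y z < asym_cos y c)"

lemma asym_cos_le_1: "asym_cos y z \<le> 1"
  unfolding asym_cos_def by (intro liminf_real_le_const bounded_range_cos cos_le_one)

lemma asym_cos_diff_le_dist: "asym_cos y z - dist z z' \<le> asym_cos y z'"
proof -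
  have "asym_cos y z - dist z z' = liminf_real (\<lambda>n. - dist z z' + cos (dist (y n) z))"
    unfolding asym_cos_def
    using liminf_real_add_tendsto[OF tendsto_const bounded_range_cos, of "- dist z z'"] by simp
  also have "\<dots> \<le> asym_cos y z'"
    unfolding asym_cos_def
  proof (rule liminf_real_mono[OF _ bounded_range_cos always_eventually])
    show "bounded (range (\<lambda>n. - dist z z' + cos (dist (y n) z)))"
      by (rule bounded_plus_comp[OF _ bounded_range_cos]) simp
    show "\<forall>n. - dist z z' + cos (dist (y n) z) \<le> cos (dist (y n) z')"
    proof
      fix n
      show "- dist z z' + cos (dist (y n) z) \<le> cos (dist (y n) z')"
        using abs_cos_dist_diff_le[of z "y n" z'] by (simp add: dist_commute abs_le_iff)
    qed
  qed
  finally show ?thesis .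
qed

lemma asym_cos_tendsto:
  assumes "(\<lambda>n. cos (dist (y n) z)) \<longlonglongrightarrow> a"
  shows "asym_cos y z = a"
  unfolding asym_cos_def by (rule liminf_real_tendsto[OF assms])

context small_CAT1_space
begin

lemma cos_diameter_le_asym_cos:
  assumes "\<And>n. y n \<in> X" "z \<in> X"
  shows "cos (diameter X) \<le> asym_cos y z"
  unfolding asym_cos_def
  by (intro const_le_liminf_real bounded_range_cos cos_diameter_le_cos_dist assms)

lemma asym_cos_add_le:
  assumes y: "\<And>n. y n \<in> X" and pX: "p \<in> X" and zX: "z \<in> X"
    and \<Gamma>: "\<forall>w\<in>X. asym_cos y w \<le> \<Gamma>"
  shows "asym_cos y p + asym_cos y z \<le> 2 * cos (dist p z / 2) * \<Gamma>"
proof -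
  obtain m where mX: "m \<in> X"
    and mid: "\<And>x. x \<in> X \<Longrightarrow> cos (dist x p) + cos (dist x z) \<le> 2 * cos (dist p z / 2) * cos (dist x m)"
    using CAT1_midpoint_cos_ineq[OF pX zX] by blast
  have half_pos: "0 < cos (dist p z / 2)"
    using dist_less_pi_half[OF pX zX] zero_le_dist[of p z] by (intro cos_gt_zero_pi) linarith+
  have "asym_cos y p + asym_cos y z \<le> liminf_real (\<lambda>n. cos (dist (y n) p) + cos (dist (y n) z))"
    unfolding asym_cos_def by (intro liminf_real_add_ge bounded_range_cos)
  also have "\<dots> \<le> liminf_real (\<lambda>n. 2 * cos (dist p z / 2) * cos (dist (y n) m))"
  proof (rule liminf_real_mono)
    show "bounded (range (\<lambda>n. cos (dist (y n) p) + cos (dist (y n) z)))"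
      by (rule bounded_plus_comp[OF bounded_range_cos bounded_range_cos])
    show "bounded (range (\<lambda>n. 2 * cos (dist p z / 2) * cos (dist (y n) m)))"
      using bounded_scaling[OF bounded_range_cos, of "2 * cos (dist p z / 2)"]
      by (simp add: image_image)
    show "eventually (\<lambda>n. cos (dist (y n) p) + cos (dist (y n) z)
                           \<le> 2 * cos (dist p z / 2) * cos (dist (y n) m)) sequentially"
      using mid y by simp
  qed
  also have "\<dots> = 2 * cos (dist p z / 2) * asym_cos y m"
    unfolding asym_cos_def using half_pos by (intro liminf_real_cmult bounded_range_cos) simp
  also have "\<dots> \<le> 2 * cos (dist p z / 2) * \<Gamma>"
    using \<Gamma> mX half_pos by simp
  finally show ?thesis .
qed

lemma asym_cos_pos:
  assumes "\<And>n. y n \<in> X" "z \<in> X"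
  shows "0 < asym_cos y z"
  using cos_diameter_pos cos_diameter_le_asym_cos[of y, OF assms] by linarith

lemma asym_cos_maximiser_unique:
  assumes y: "\<And>n. y n \<in> X" and pX: "p \<in> X" and zX: "z \<in> X"
    and \<Gamma>: "\<forall>w\<in>X. asym_cos y w \<le> \<Gamma>" and "\<Gamma> \<le> asym_cos y p" "\<Gamma> \<le> asym_cos y z"
  shows "p = z"
proof -
  have "0 < \<Gamma>"
    using asym_cos_pos[of y, OF y pX] \<Gamma> pX by fastforce
  moreover have "2 * \<Gamma> \<le> 2 * cos (dist p z / 2) * \<Gamma>"
    using asym_cos_add_le[OF y pX zX \<Gamma>] assms(5,6) by linarith
  ultimately have "cos 0 \<le> cos (dist p z / 2)"
    by simp
  moreover have "dist p z / 2 \<le> pi"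
    using dist_less_pi_half[OF pX zX] pi_gt_zero by linarith
  ultimately show "p = z"
    using cos_mono_le_eq[of 0 "dist p z / 2"] by simp
qed

lemma Cauchy_of_asym_cos_maximising:
  assumes y: "\<And>n. y n \<in> X" and zs: "\<And>k. zs k \<in> X"
    and \<Gamma>: "\<forall>w\<in>X. asym_cos y w \<le> \<Gamma>" and lim: "(\<lambda>k. asym_cos y (zs k)) \<longlonglongrightarrow> \<Gamma>"
  shows "Cauchy zs"
proof (rule metric_CauchyI)
  fix e :: real assume "0 < e"
  define e' where "e' = min e 1"
  have e': "0 < e'" "e' \<le> e" "e' / 2 \<le> pi"
    using \<open>0 < e\<close> pi_gt3 by (auto simp: e'_def)
  have "cos (e' / 2) < 1"
    using cos_mono_less_eq[of "e' / 2" 0] e' by simp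
  moreover have "0 < \<Gamma>"
    using asym_cos_pos[of y, OF y zs] \<Gamma> zs by (meson less_le_trans)
  ultimately have "\<Gamma> - \<Gamma> * (1 - cos (e' / 2)) < \<Gamma>"
    by simp
  then obtain N where N: "\<And>k. N \<le> k \<Longrightarrow> \<Gamma> - \<Gamma> * (1 - cos (e' / 2)) < asym_cos y (zs k)"
    using order_tendstoD(1)[OF lim] unfolding eventually_sequentially by blast
  have "dist (zs j) (zs k) < e" if "N \<le> j" "N \<le> k" for j k
  proof -
    have "2 * \<Gamma> - 2 * \<Gamma> * (1 - cos (e' / 2)) < 2 * cos (dist (zs j) (zs k) / 2) * \<Gamma>"
      using N[OF that(1)] N[OF that(2)] asym_cos_add_le[of y, OF y zs[of j] zs[of k] \<Gamma>] by linarith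
    then have "cos (e' / 2) < cos (dist (zs j) (zs k) / 2)"
      using \<open>0 < \<Gamma>\<close> by (simp add: algebra_simps)
    moreover have "dist (zs j) (zs k) / 2 \<le> pi"
      using dist_less_pi_half[OF zs[of j] zs[of k]] pi_gt_zero by linarith
    ultimately have "dist (zs j) (zs k) / 2 < e' / 2"
      using cos_mono_less_eq e' by simp
    with e' show ?thesis
      by simp
  qed
  then show "\<exists>M. \<forall>m\<ge>M. \<forall>n\<ge>M. dist (zs m) (zs n) < e"
    by blast
qed

lemma asymptotic_center_exists:
  assumes y: "\<And>n. y n \<in> X"
  shows "\<exists>c. asymptotic_center X y c"
proof -
  define \<Gamma> where "\<Gamma> = Sup (asym_cos y ` X)"
  have bdd: "bdd_above (asym_cos y ` X)"
    by (intro bdd_aboveI[of _ 1]) (auto simp: asym_cos_le_1)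
  have \<Gamma>: "\<forall>w\<in>X. asym_cos y w \<le> \<Gamma>"
    unfolding \<Gamma>_def using bdd by (auto intro: cSup_upper)
  have "\<Gamma> \<in> closure (asym_cos y ` X)"
    unfolding \<Gamma>_def using y by (intro closure_contains_Sup bdd) auto
  then obtain gs where gs: "\<And>k. gs k \<in> asym_cos y ` X" and "gs \<longlonglongrightarrow> \<Gamma>"
    unfolding closure_sequential by blast
  moreover have "\<forall>k. \<exists>z. z \<in> X \<and> gs k = asym_cos y z"
    using gs by blast
  then obtain zs where zs: "\<And>k. zs k \<in> X" and "\<And>k. gs k = asym_cos y (zs k)"
    using choice by metis
  then have "gs = (\<lambda>k. asym_cos y (zs k))"
    by (simp add: fun_eq_iff)
  ultimately have lim: "(\<lambda>k. asym_cos y (zs k)) \<longlonglongrightarrow> \<Gamma>"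
    by simp
  have "Cauchy zs"
    by (rule Cauchy_of_asym_cos_maximising[of y, OF y zs \<Gamma> lim])
  then obtain c where cX: "c \<in> X" and zs_c: "zs \<longlonglongrightarrow> c"
    using complete zs unfolding complete_def by blast
  have conv: "(\<lambda>k. asym_cos y (zs k) - dist (zs k) c) \<longlonglongrightarrow> \<Gamma> - 0"
    by (intro tendsto_diff lim tendsto_dist_iff[THEN iffD1] zs_c)
  have "\<Gamma> - 0 \<le> asym_cos y c"
    by (rule LIMSEQ_le_const2[OF conv]) (use asym_cos_diff_le_dist in blast)
  then have "asym_cos y z < asym_cos y c" if "z \<in> X" "z \<noteq> c" for z
    using asym_cos_maximiser_unique[of y, OF y cX that(1) \<Gamma>] \<Gamma> that by fastforce
  with cX show ?thesis
    unfolding asymptotic_center_def by blast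
qed

lemma limsup_dist_less_of_asym_cos_less:
  assumes y: "\<And>n. y n \<in> X" and zX: "z \<in> X" and z'X: "z' \<in> X"
    and less: "asym_cos y z < asym_cos y z'"
  shows "limsup (\<lambda>n. ereal (dist (y n) z')) < limsup (\<lambda>n. ereal (dist (y n) z))"
proof -
  define t1 where "t1 = (2 * asym_cos y z + asym_cos y z') / 3"
  define t2 where "t2 = (asym_cos y z + 2 * asym_cos y z') / 3"
  have t: "asym_cos y z < t1" "t1 < t2" "t2 < asym_cos y z'"
    using less by (simp_all add: t1_def t2_def)
  have d: "dist (y n) w \<le> pi" if "w \<in> X" for n w
    using dist_less_pi_half[OF y that, of n] pi_gt_zero by linarith
  have "limsup (\<lambda>n. ereal (dist (y n) z')) \<le> ereal (arccos t2)"
    using asym_cos_pos[of y, OF y zX] t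
    by (intro limsup_le_arccos_of_less_liminf_cos zero_le_dist d[OF z'X]) (auto simp: asym_cos_def)
  also have "\<dots> < ereal (arccos t1)"
    using asym_cos_pos[of y, OF y zX] asym_cos_le_1[of y z'] t by (simp add: arccos_less_arccos)
  also have "\<dots> \<le> limsup (\<lambda>n. ereal (dist (y n) z))"
    using asym_cos_le_1[of y z'] t
    by (intro arccos_le_limsup_of_liminf_cos_less zero_le_dist d[OF zX]) (auto simp: asym_cos_def)
  finally show ?thesis .
qed

end

section \<open>Orbits of firmly vicinal maps\<close>

lemma normalized_weighted_le:
  fixes a b A B K :: real
  assumes "0 < a" "0 \<le> b" "a * A + b * B \<le> (a + b) * K"
  shows "a / (a + b) * A + (1 - a / (a + b)) * B \<le> K"
proof -
  have "0 < a + b"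
    using assms(1,2) by simp
  then have "(a + b) * (a / (a + b)) = a" "(a + b) * (1 - a / (a + b)) = b"
    by (simp_all add: right_diff_distrib)
  then have "(a + b) * (a / (a + b) * A + (1 - a / (a + b)) * B) = a * A + b * B"
    by (metis distrib_left mult.assoc)
  with assms(3) \<open>0 < a + b\<close> show ?thesis
    by (metis mult_le_cancel_left_pos)
qed

lemma firmly_vicinal_weight_ge:
  fixes k Cx Cz :: real
  assumes "0 < k" "k \<le> Cx" "Cx \<le> 1" "0 \<le> Cz" "Cz \<le> 1"
  defines "a \<equiv> Cx\<^sup>2 * (1 + Cz\<^sup>2)" and "b \<equiv> Cz\<^sup>2 * (1 + Cx\<^sup>2)"
  shows "k\<^sup>2 / 4 \<le> a / (a + b)" and "0 < a"
proof -
  have "k\<^sup>2 \<le> Cx\<^sup>2"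
    using assms(1,2) by (intro power_mono) auto
  also have "\<dots> \<le> a"
    by (simp add: a_def mult_le_cancel_left1)
  finally have "k\<^sup>2 \<le> a" .
  then show "0 < a"
    using assms(1) by (meson less_le_trans zero_less_power)
  have "0 \<le> b"
    by (simp add: b_def)
  have "Cx\<^sup>2 \<le> 1" "Cz\<^sup>2 \<le> 1"
    using assms by (simp_all add: power_le_one)
  then have "a + b \<le> 4"
    using mult_mono[of "Cx\<^sup>2" 1 "1 + Cz\<^sup>2" 2] mult_mono[of "Cz\<^sup>2" 1 "1 + Cx\<^sup>2" 2]
    by (simp add: a_def b_def)
  have "k\<^sup>2 / 4 \<le> a / 4"
    using \<open>k\<^sup>2 \<le> a\<close> by simp
  also have "\<dots> \<le> a / (a + b)"
    using \<open>0 < a\<close> \<open>0 \<le> b\<close> \<open>a + b \<le> 4\<close> by (intro divide_left_mono) auto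
  finally show "k\<^sup>2 / 4 \<le> a / (a + b)" .
qed

locale firmly_vicinal_self_map = small_CAT1_space +
  fixes T :: "'a::metric_space \<Rightarrow> 'a"
  assumes maps_into: "\<forall>x\<in>X. T x \<in> X" and firmly_vicinal: "firmly_vicinal X T"
begin

lemma firmly_vicinal_toward_fixed_point:
  assumes xX: "x \<in> X" and pX: "p \<in> X" and Tp: "T p = p"
  shows "cos (dist x p) \<le> cos (dist (T x) x) * cos (dist (T x) p)"
proof -
  define C where "C = cos (dist (T x) x)"
  define K where "K = cos (dist (T x) p)"
  have "(C\<^sup>2 * (1 + 1\<^sup>2) * 1 + 1\<^sup>2 * (1 + C\<^sup>2) * C) * K
          \<ge> C\<^sup>2 * (1 + 1\<^sup>2) * K + 1\<^sup>2 * (1 + C\<^sup>2) * cos (dist p x)"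
    using firmly_vicinal xX pX unfolding firmly_vicinal_def Let_def
    by (force simp: Tp C_def K_def)
  then have "(1 + C\<^sup>2) * cos (dist x p) \<le> (1 + C\<^sup>2) * (C * K)"
    by (simp add: algebra_simps dist_commute)
  moreover have "0 < 1 + C\<^sup>2"
    by (simp add: add_pos_nonneg)
  ultimately show ?thesis
    by (simp add: C_def K_def)
qed

lemma firmly_vicinal_relaxation:
  assumes xX: "x \<in> X" and zX: "z \<in> X"
  shows "\<exists>l. (cos (diameter X))\<^sup>2 / 4 \<le> l \<and> l \<le> 1 \<and>
    l * cos (dist (T x) z) + (1 - l) * cos (dist x (T z)) \<le> cos (dist (T x) (T z))"
proof -
  define Cx where "Cx = cos (dist (T x) x)"
  define Cz where "Cz = cos (dist (T z) z)"
  define a where "a = Cx\<^sup>2 * (1 + Cz\<^sup>2)"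
  define b where "b = Cz\<^sup>2 * (1 + Cx\<^sup>2)"
  define K where "K = cos (dist (T x) (T z))"
  have TxX: "T x \<in> X" and TzX: "T z \<in> X"
    using maps_into xX zX by auto
  have Cx: "cos (diameter X) \<le> Cx" "Cx \<le> 1" and Cz: "0 \<le> Cz" "Cz \<le> 1" and "0 < K"
    using cos_diameter_le_cos_dist[OF TxX xX] cos_diameter_le_cos_dist[OF TzX zX]
      cos_diameter_le_cos_dist[OF TxX TzX] cos_diameter_pos
    by (auto simp: Cx_def Cz_def K_def)
  have "a * cos (dist (T x) z) + b * cos (dist x (T z)) \<le> (a * Cz + b * Cx) * K"
    using firmly_vicinal xX zX unfolding firmly_vicinal_def Let_def
    by (force simp: a_def b_def Cx_def Cz_def K_def dist_commute)
  also have "\<dots> \<le> (a + b) * K"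
    using \<open>0 < K\<close> Cx Cz cos_diameter_pos
    by (intro mult_right_mono add_mono mult_left_le) (auto simp: a_def b_def)
  finally have weighted: "a * cos (dist (T x) z) + b * cos (dist x (T z)) \<le> (a + b) * K" .
  have "(cos (diameter X))\<^sup>2 / 4 \<le> a / (a + b)" "0 < a"
    using firmly_vicinal_weight_ge[OF cos_diameter_pos Cx Cz] by (simp_all add: a_def b_def)
  moreover have "0 \<le> b"
    by (simp add: b_def)
  moreover from calculation have "a / (a + b) \<le> 1"
    by simp
  ultimately show ?thesis
    using normalized_weighted_le[OF \<open>0 < a\<close> \<open>0 \<le> b\<close> weighted] unfolding K_def by blast
qed

lemma orbit_in: "x \<in> X \<Longrightarrow> (T ^^ n) x \<in> X"
  by (induction n) (auto simp: maps_into)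

lemma relaxation_weight: "0 < (cos (diameter X))\<^sup>2 / 4" "(cos (diameter X))\<^sup>2 / 4 \<le> 1"
  using cos_diameter_pos power_le_one[OF _ cos_le_one, of "diameter X" 2] by simp_all

lemma orbit_dominates_relaxation:
  assumes "x \<in> X" "q \<in> X"
  shows "dominates_relaxation ((cos (diameter X))\<^sup>2 / 4)
           (\<lambda>n. cos (dist ((T ^^ n) x) (T q))) (\<lambda>n. cos (dist ((T ^^ n) x) q))"
  unfolding dominates_relaxation_def
  using firmly_vicinal_relaxation[OF orbit_in[OF assms(1)] assms(2)] by simp

lemma asymptotic_center_orbit_fixed:
  assumes xX: "x \<in> X" and c: "asymptotic_center X (\<lambda>n. (T ^^ n) x) c"
  shows "T c = c"
proof (rule ccontr)
  assume "T c \<noteq> c"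
  have cX: "c \<in> X"
    using c by (simp add: asymptotic_center_def)
  have "asym_cos (\<lambda>n. (T ^^ n) x) c \<le> asym_cos (\<lambda>n. (T ^^ n) x) (T c)"
    unfolding asym_cos_def
    by (rule liminf_real_le_of_dominates_relaxation[OF bounded_range_cos bounded_range_cos
          orbit_dominates_relaxation[OF xX cX] relaxation_weight])
  with c \<open>T c \<noteq> c\<close> show False
    using maps_into cX unfolding asymptotic_center_def by force
qed

lemma cos_dist_orbit_fixed_point:
  assumes xX: "x \<in> X" and pX: "p \<in> X" and Tp: "T p = p"
  shows "cos (dist ((T ^^ n) x) p)
           \<le> cos (dist ((T ^^ Suc n) x) ((T ^^ n) x)) * cos (dist ((T ^^ Suc n) x) p)"
    and "cos (dist ((T ^^ n) x) p) \<le> cos (dist ((T ^^ Suc n) x) p)"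
proof -
  show step: "cos (dist ((T ^^ n) x) p)
           \<le> cos (dist ((T ^^ Suc n) x) ((T ^^ n) x)) * cos (dist ((T ^^ Suc n) x) p)"
    using firmly_vicinal_toward_fixed_point[OF orbit_in[OF xX] pX Tp] by simp
  have "0 \<le> cos (dist ((T ^^ Suc n) x) p)"
    using cos_diameter_le_cos_dist[OF orbit_in[OF xX, of "Suc n"] pX] cos_diameter_pos by linarith
  then show "cos (dist ((T ^^ n) x) p) \<le> cos (dist ((T ^^ Suc n) x) p)"
    using order_trans[OF step mult_right_mono[OF cos_le_one]] by simp
qed

lemma cos_dist_orbit_fixed_point_convergent:
  assumes xX: "x \<in> X" and pX: "p \<in> X" and Tp: "T p = p"
  obtains W where "(\<lambda>n. cos (dist ((T ^^ n) x) p)) \<longlonglongrightarrow> W" "0 < W"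
proof -
  have "incseq (\<lambda>n. cos (dist ((T ^^ n) x) p))"
    by (rule incseq_SucI) (use cos_dist_orbit_fixed_point(2)[OF xX pX Tp] in simp)
  then obtain W where W: "(\<lambda>n. cos (dist ((T ^^ n) x) p)) \<longlonglongrightarrow> W"
    and upper: "\<And>n. cos (dist ((T ^^ n) x) p) \<le> W"
    using incseq_convergent[of _ 1] cos_le_one by metis
  have "0 < W"
    using upper[of 0] cos_diameter_le_cos_dist[OF orbit_in[OF xX, of 0] pX] cos_diameter_pos by linarith
  with W that show ?thesis
    by blast
qed

lemma orbit_asymptotically_regular:
  assumes xX: "x \<in> X" and pX: "p \<in> X" and Tp: "T p = p"
  shows "(\<lambda>n. dist ((T ^^ Suc n) x) ((T ^^ n) x)) \<longlonglongrightarrow> 0"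
proof (rule tendstoI)
  fix e :: real assume "0 < e"
  define w where "w n = cos (dist ((T ^^ n) x) p)" for n
  obtain W where W: "w \<longlonglongrightarrow> W" "0 < W"
    using cos_dist_orbit_fixed_point_convergent[OF xX pX Tp] unfolding w_def by blast
  have "(\<lambda>n. w n / w (Suc n)) \<longlonglongrightarrow> W / W"
    using W by (intro tendsto_divide W(1) LIMSEQ_Suc) auto
  moreover have "cos (min e 1) < 1"
    using \<open>0 < e\<close> pi_gt3 cos_mono_less_eq[of "min e 1" 0] by simp
  ultimately have "eventually (\<lambda>n. cos (min e 1) < w n / w (Suc n)) sequentially"
    using W(2) by (intro order_tendstoD) simp_all
  then show "eventually (\<lambda>n. dist (dist ((T ^^ Suc n) x) ((T ^^ n) x)) 0 < e) sequentially"
  proof (rule eventually_mono)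
    fix n
    let ?d = "dist ((T ^^ Suc n) x) ((T ^^ n) x)"
    assume "cos (min e 1) < w n / w (Suc n)"
    moreover have "0 < w (Suc n)"
      using cos_diameter_le_cos_dist[OF orbit_in[OF xX, of "Suc n"] pX] cos_diameter_pos
      unfolding w_def by linarith
    then have "w n / w (Suc n) \<le> cos ?d"
      using cos_dist_orbit_fixed_point(1)[OF xX pX Tp, of n] by (simp add: w_def divide_le_eq)
    moreover have "?d \<le> pi"
      using dist_less_pi_half[OF orbit_in[OF xX] orbit_in[OF xX], of "Suc n" n] pi_gt_zero by linarith
    ultimately have "?d < min e 1"
      using cos_mono_less_eq[of "min e 1" ?d] pi_gt3 \<open>0 < e\<close> by simp
    then show "dist ?d 0 < e"
      by simp
  qed
qed

lemma asym_cos_orbit_subseq_fixed_point: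
  assumes xX: "x \<in> X" and pX: "p \<in> X" and Tp: "T p = p" and r: "strict_mono r"
  shows "asym_cos ((\<lambda>n. (T ^^ n) x) \<circ> r) p = asym_cos (\<lambda>n. (T ^^ n) x) p"
proof -
  obtain W where W: "(\<lambda>n. cos (dist ((T ^^ n) x) p)) \<longlonglongrightarrow> W"
    using cos_dist_orbit_fixed_point_convergent[OF xX pX Tp] by blast
  then have "(\<lambda>i. cos (dist (((\<lambda>n. (T ^^ n) x) \<circ> r) i) p)) \<longlonglongrightarrow> W"
    using LIMSEQ_subseq_LIMSEQ[OF W r] by (simp add: comp_def)
  with W show ?thesis
    by (simp add: asym_cos_tendsto)
qed

lemma asymptotic_center_orbit_subseq_fixed:
  assumes xX: "x \<in> X" and pX: "p \<in> X" and Tp: "T p = p" and r: "strict_mono r"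
    and c: "asymptotic_center X ((\<lambda>n. (T ^^ n) x) \<circ> r) c"
  shows "T c = c"
proof (rule ccontr)
  assume "T c \<noteq> c"
  have cX: "c \<in> X"
    using c by (simp add: asymptotic_center_def)
  have "(\<lambda>n. cos (dist ((T ^^ Suc n) x) (T c)) - cos (dist ((T ^^ n) x) (T c))) \<longlonglongrightarrow> 0"
    by (rule Lim_null_comparison[OF always_eventually orbit_asymptotically_regular[OF xX pX Tp]])
      (simp add: abs_cos_dist_diff_le)
  then have "asym_cos ((\<lambda>n. (T ^^ n) x) \<circ> r) c \<le> asym_cos ((\<lambda>n. (T ^^ n) x) \<circ> r) (T c)"
    unfolding asym_cos_def
    using liminf_real_subseq_le_of_dominates_relaxation[OF bounded_range_cos bounded_range_cos
          orbit_dominates_relaxation[OF xX cX] relaxation_weight(1) _ r]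
    by (simp add: comp_def)
  with c \<open>T c \<noteq> c\<close> show False
    using maps_into cX unfolding asymptotic_center_def by force
qed

lemma orbit_Delta_convergent:
  assumes xX: "x \<in> X"
  shows "\<exists>p\<in>X. T p = p \<and> Delta_convergent X (\<lambda>n. (T ^^ n) x) p"
proof -
  let ?y = "\<lambda>n. (T ^^ n) x"
  obtain p where p: "asymptotic_center X ?y p"
    using asymptotic_center_exists[of ?y] orbit_in[OF xX] by blast
  then have pX: "p \<in> X" and Tp: "T p = p"
    using asymptotic_center_orbit_fixed[OF xX] by (auto simp: asymptotic_center_def)
  have "limsup (\<lambda>i. ereal (dist (?y (r i)) p)) < limsup (\<lambda>i. ereal (dist (?y (r i)) z))"
    if r: "strict_mono r" and zX: "z \<in> X" and "z \<noteq> p" for r z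
  proof -
    obtain q where q: "asymptotic_center X (?y \<circ> r) q"
      using asymptotic_center_exists[of "?y \<circ> r"] orbit_in[OF xX] by auto
    then have qX: "q \<in> X" and Tq: "T q = q"
      using asymptotic_center_orbit_subseq_fixed[OF xX pX Tp r] by (auto simp: asymptotic_center_def)
    \<comment> \<open>along the subsequence, the values at the fixed points \<open>p\<close> and \<open>q\<close> are those of the whole orbit\<close>
    have "q = p"
      using p q pX qX asym_cos_orbit_subseq_fixed_point[OF xX _ _ r] Tp Tq
      unfolding asymptotic_center_def by (metis less_asym)
    then have "asym_cos (?y \<circ> r) z < asym_cos (?y \<circ> r) p"
      using q zX \<open>z \<noteq> p\<close> by (simp add: asymptotic_center_def)
    then show ?thesis
      using limsup_dist_less_of_asym_cos_less[of "?y \<circ> r"] orbit_in[OF xX] zX pX by simp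
  qed
  with pX Tp show ?thesis
    unfolding Delta_convergent_def by blast
qed

end

theorem corollary4p7:
  fixes X :: "'a::metric_space set" and T :: "'a \<Rightarrow> 'a"
  assumes "CAT1_space X" and "complete X"
    and "bounded X" and "diameter X < pi / 2"
    and "\<forall>x\<in>X. T x \<in> X"
    and "firmly_vicinal X T"
  shows "\<forall>x\<in>X. \<exists>p\<in>{z\<in>X. T z = z}. Delta_convergent X (\<lambda>n. (T ^^ n) x) p"
proof -
  interpret firmly_vicinal_self_map X T
    by unfold_locales (use assms in auto)
  show ?thesis
    using orbit_Delta_convergent by blast
qed

end
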